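(* Let $k$ be a fixed complex number. For every integer $n>0$, $$(\Lambda_{\Omega}\ast\beta_k)(n)=\Omega(n)\beta_k(n)-\beta_k(n).$$
   Context: $\Omega(n)=\sum_{p^\alpha\parallel n}\alpha$ is the number of prime factors of $n$ counted with multiplicity. $\Lambda_\Omega(n)=1$ if $n=p^k$ for some prime $p$ and integer $k\geq1$, and $\Lambda_\Omega(n)=0$ otherwise. $\beta_k(n)=\sum_{p\mid n}p^k$ is the sum of the $k$-th powers of the distinct prime factors of $n$. $\ast$ is Dirichlet convolution $(F\ast G)(n)=\sum_{d\mid n}F(d)G(n/d)$. *)

theory Defs
  imports "HOL-Analysis.Analysis" "HOL-Computational_Algebra.Primes"
begin

definition bigOmega :: "nat \<Rightarrow> nat" where
  "bigOmega n = size (prime_factorization n)"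

definition LambdaOmega :: "nat \<Rightarrow> complex" where
  "LambdaOmega n = (if \<exists>p j. prime p \<and> j \<ge> 1 \<and> n = p ^ j then 1 else 0)"

definition beta :: "complex \<Rightarrow> nat \<Rightarrow> complex" where
  "beta k n = (\<Sum>p\<in>prime_factors n. (of_nat p) powr k)"

definition dirichlet_conv :: "(nat \<Rightarrow> complex) \<Rightarrow> (nat \<Rightarrow> complex) \<Rightarrow> nat \<Rightarrow> complex" where
  "dirichlet_conv F G n = (\<Sum>d | d dvd n. F d * G (n div d))"

end

(* The divisors d of n with Lambda_Omega(d) = 1 are the p^j with p | n and 1 <= j <= v_p(n).
   Dividing n by p^j removes p from the set of prime factors exactly when j = v_p(n), so
   beta_k(n / p^j) = beta_k(n) - [j = v_p(n)] p^k.  Summing over j, each prime p | n contributes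
   v_p(n) beta_k(n) - p^k, and summing over p gives Omega(n) beta_k(n) - beta_k(n). *)

theory Submission
  imports Defs
begin

lemma size_prime_factorization_eq_sum_multiplicity:
  "size (prime_factorization n) = (\<Sum>p\<in>prime_factors n. multiplicity p n)"
  by (simp add: size_multiset_overloaded_eq count_prime_factorization_prime
      in_prime_factors_imp_prime cong: sum.cong)

lemma prime_factors_div_prime_power:
  fixes n p :: "'a :: factorial_semiring"
  assumes "n \<noteq> 0" "prime p" "j \<ge> 1" "j \<le> multiplicity p n"
  shows "prime_factors (n div p ^ j) =
           (if j = multiplicity p n then prime_factors n - {p} else prime_factors n)"
proof -
  define m where "m = n div p ^ j"
  have n_eq: "n = p ^ j * m"
    using multiplicity_dvd'[OF assms(4)] by (simp add: m_def)
  have "m \<noteq> 0" "p ^ j \<noteq> 0"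
    using assms n_eq by auto
  then have factors_n: "prime_factors n = insert p (prime_factors m)"
    using assms by (simp add: n_eq prime_factors_product prime_factorization_prime_power)
  have "multiplicity p n = j + multiplicity p m"
    using \<open>m \<noteq> 0\<close> \<open>p ^ j \<noteq> 0\<close> assms(2) by (simp add: n_eq prime_elem_multiplicity_mult_distrib)
  then have "p \<in> prime_factors m \<longleftrightarrow> j \<noteq> multiplicity p n"
    using assms(2) by (auto simp: prime_factors_multiplicity)
  then show ?thesis
    using factors_n by (auto simp flip: m_def)
qed

lemma prime_power_divisors_eq:
  fixes n :: "'a :: factorial_semiring"
  assumes "n \<noteq> 0"
  shows "{d. d dvd n \<and> (\<exists>p j. prime p \<and> j \<ge> 1 \<and> d = p ^ j)} =
           (\<lambda>(p, j). p ^ j) ` (SIGMA p:prime_factors n. {1..multiplicity p n})"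
proof (intro equalityI subsetI)
  fix d assume "d \<in> {d. d dvd n \<and> (\<exists>p j. prime p \<and> j \<ge> 1 \<and> d = p ^ j)}"
  then obtain p j where "prime p" "j \<ge> 1" "d = p ^ j" "p ^ j dvd n"
    by auto
  moreover from this have "j \<le> multiplicity p n"
    using assms by (intro multiplicity_geI) auto
  ultimately show "d \<in> (\<lambda>(p, j). p ^ j) ` (SIGMA p:prime_factors n. {1..multiplicity p n})"
    by (force simp: prime_factors_multiplicity)
next
  fix d assume "d \<in> (\<lambda>(p, j). p ^ j) ` (SIGMA p:prime_factors n. {1..multiplicity p n})"
  then obtain p j where "p \<in> prime_factors n" "1 \<le> j" "j \<le> multiplicity p n" "d = p ^ j"
    by auto
  moreover from this have "prime p" "p ^ j dvd n"
    by (auto intro: multiplicity_dvd' in_prime_factors_imp_prime)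
  ultimately show "d \<in> {d. d dvd n \<and> (\<exists>p j. prime p \<and> j \<ge> 1 \<and> d = p ^ j)}"
    by blast
qed

lemma inj_on_prime_power:
  "inj_on (\<lambda>(p, j). p ^ j) {(p :: 'a :: factorial_semiring, j). prime p \<and> j \<ge> 1}"
  by (auto simp: inj_on_def dest: prime_power_inj')

lemma dirichlet_conv_LambdaOmega:
  assumes "n > 0"
  shows "dirichlet_conv LambdaOmega F n =
           (\<Sum>p\<in>prime_factors n. \<Sum>j=1..multiplicity p n. F (n div p ^ j))"
proof -
  let ?S = "SIGMA p:prime_factors n. {1..multiplicity p n}"
  let ?prime_power = "\<lambda>d::nat. \<exists>p j. prime p \<and> j \<ge> 1 \<and> d = p ^ j"
  have "dirichlet_conv LambdaOmega F n = (\<Sum>d | d dvd n. if ?prime_power d then F (n div d) else 0)"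
    unfolding dirichlet_conv_def LambdaOmega_def by (rule sum.cong) auto
  also have "\<dots> = (\<Sum>d | d dvd n \<and> ?prime_power d. F (n div d))"
    using assms by (simp add: sum.inter_filter[symmetric])
  also have "\<dots> = (\<Sum>d\<in>(\<lambda>(p, j). p ^ j) ` ?S. F (n div d))"
    using assms by (intro sum.cong[OF prime_power_divisors_eq refl]) simp
  also have "\<dots> = (\<Sum>(p, j)\<in>?S. F (n div p ^ j))"
  proof -
    have "inj_on (\<lambda>(p, j). p ^ j) ?S"
      by (rule inj_on_subset[OF inj_on_prime_power]) (auto dest: in_prime_factors_imp_prime)
    then show ?thesis
      by (simp add: sum.reindex case_prod_unfold)
  qed
  also have "\<dots> = (\<Sum>p\<in>prime_factors n. \<Sum>j=1..multiplicity p n. F (n div p ^ j))"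
    by (rule sum.Sigma[symmetric]) auto
  finally show ?thesis .
qed

lemma beta_div_prime_power:
  assumes "n > 0" "prime p" "j \<ge> 1" "j \<le> multiplicity p n"
  shows "beta k (n div p ^ j) = beta k n - (if j = multiplicity p n then of_nat p powr k else 0)"
proof -
  have "p \<in> prime_factors n"
    using assms by (simp add: prime_factors_multiplicity)
  then show ?thesis
    using prime_factors_div_prime_power[OF _ assms(2-4)] assms(1)
    by (simp add: beta_def sum_diff1)
qed

theorem theorem3p1:
  fixes k :: complex and n :: nat
  assumes "n > 0"
  shows "dirichlet_conv LambdaOmega (beta k) n = of_nat (bigOmega n) * beta k n - beta k n"
proof -
  have "dirichlet_conv LambdaOmega (beta k) n =
          (\<Sum>p\<in>prime_factors n. \<Sum>j=1..multiplicity p n. beta k (n div p ^ j))"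
    by (rule dirichlet_conv_LambdaOmega[OF assms])
  also have "\<dots> = (\<Sum>p\<in>prime_factors n. \<Sum>j=1..multiplicity p n.
                      beta k n - (if j = multiplicity p n then of_nat p powr k else 0))"
    using assms by (intro sum.cong refl beta_div_prime_power) (auto dest: in_prime_factors_imp_prime)
  also have "\<dots> = (\<Sum>p\<in>prime_factors n. of_nat (multiplicity p n) * beta k n - of_nat p powr k)"
  proof (rule sum.cong[OF refl])
    fix p assume "p \<in> prime_factors n"
    then have "multiplicity p n \<in> {1..multiplicity p n}"
      by (simp add: prime_factors_multiplicity)
    then show "(\<Sum>j=1..multiplicity p n.
                 beta k n - (if j = multiplicity p n then of_nat p powr k else 0)) =
               of_nat (multiplicity p n) * beta k n - of_nat p powr k"
      by (simp add: sum_subtractf)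
  qed
  also have "\<dots> = of_nat (bigOmega n) * beta k n - beta k n"
    by (simp add: sum_subtractf sum_distrib_right bigOmega_def
        size_prime_factorization_eq_sum_multiplicity beta_def)
  finally show ?thesis .
qed

end
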